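(* A lattice $L$ is isomorphic to a lattice of subclones (i.e., to the lattice $\mathrm{Sb}(F)$ of all subclones of some clone $F$ on some set $A$) if and only if $L$ is isomorphic to the lattice of subalgebras of a block algebra.
   Context: Finitary operations on $A$ include nullary ones. A clone on $A$ is a set of finitary operations on $A$ containing all projections $p^{(n)}_i(a_1,\dots,a_n)=a_i$, closed under composition ($f$ $n$-ary, $g_1,\dots,g_n$ $k$-ary, $k\ge0$, gives $\mathbf a\mapsto f(g_1(\mathbf a),\dots,g_n(\mathbf a))$) and under restriction (if an $n$-ary $f$, $n\ge1$, does not depend on its last argument, the $(n-1)$-ary $g(a_1,\dots,a_{n-1})=f(a_1,\dots,a_{n-1},b)$ belongs to it). A subclone of a clone $F$ on $A$ is a subset of $F$ that is itself a clone on $A$; $\mathrm{Sb}(F)$ is ordered by inclusion. Let $\omega=\{1,2,\dots\}$. The top extension of $f:A^n\to A$ is $f^\top:A^\omega\to A$, $f^\top(s)=f(s_1,\dots,s_n)$. The full block algebra on $A$ has universe $\{f^\top: f\text{ finitary on }A\}$, nullary operations $\mathsf e_i(s)=s_i$ ($i\ge1$) and $(n+1)$-ary operations $q_n(\varphi,\psi_1,\dots,\psi_n)(s)=\varphi(s[\psi_1(s),\dots,\psi_n(s)])$ ($n\ge0$), where $s[b_1,\dots,b_n]$ replaces the first $n$ entries of $s$ by $b_1,\dots,b_n$. A block algebra (on $A$) is a subalgebra of the full block algebra on $A$. *)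

theory Defs
  imports Main
begin

text \<open>An n-ary operation on A is represented as a pair (n, f) with
  f :: 'a list => 'a, where f maps every list of length n over A into A,
  and is undefined (extensionally) on all other lists.\<close>

type_synonym 'a op = "nat \<times> ('a list \<Rightarrow> 'a)"

definition args :: "'a set \<Rightarrow> nat \<Rightarrow> 'a list set" where
  "args A n = {xs. set xs \<subseteq> A \<and> length xs = n}"

definition is_op :: "'a set \<Rightarrow> 'a op \<Rightarrow> bool" where
  "is_op A g \<longleftrightarrow> (\<forall>xs \<in> args A (fst g). snd g xs \<in> A)
                  \<and> (\<forall>xs. xs \<notin> args A (fst g) \<longrightarrow> snd g xs = undefined)"

definition proj :: "'a set \<Rightarrow> nat \<Rightarrow> nat \<Rightarrow> 'a op" where
  "proj A n i = (n, \<lambda>xs. if xs \<in> args A n then xs ! i else undefined)"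

definition comp_op :: "'a set \<Rightarrow> nat \<Rightarrow> ('a list \<Rightarrow> 'a) \<Rightarrow> 'a op list \<Rightarrow> 'a op" where
  "comp_op A k f gs = (k, \<lambda>xs. if xs \<in> args A k then f (map (\<lambda>g. snd g xs) gs) else undefined)"

definition restr_op :: "'a set \<Rightarrow> nat \<Rightarrow> ('a list \<Rightarrow> 'a) \<Rightarrow> 'a \<Rightarrow> 'a op" where
  "restr_op A n f b = (n - 1, \<lambda>xs. if xs \<in> args A (n - 1) then f (xs @ [b]) else undefined)"

definition indep_last :: "'a set \<Rightarrow> nat \<Rightarrow> ('a list \<Rightarrow> 'a) \<Rightarrow> bool" where
  "indep_last A n f \<longleftrightarrow>
     (\<forall>xs \<in> args A (n - 1). \<forall>a \<in> A. \<forall>b \<in> A. f (xs @ [a]) = f (xs @ [b]))"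

definition clone :: "'a set \<Rightarrow> 'a op set \<Rightarrow> bool" where
  "clone A F \<longleftrightarrow>
     (\<forall>g \<in> F. is_op A g)
   \<and> (\<forall>n i. i < n \<longrightarrow> proj A n i \<in> F)
   \<and> (\<forall>n f k gs. (n, f) \<in> F \<longrightarrow> length gs = n \<longrightarrow> (\<forall>g \<in> set gs. g \<in> F \<and> fst g = k)
        \<longrightarrow> comp_op A k f gs \<in> F)
   \<and> (\<forall>n f b. (n, f) \<in> F \<longrightarrow> n \<ge> 1 \<longrightarrow> indep_last A n f \<longrightarrow> b \<in> A
        \<longrightarrow> restr_op A n f b \<in> F)"

definition Sb :: "'a set \<Rightarrow> 'a op set \<Rightarrow> 'a op set set" where
  "Sb A F = {G. G \<subseteq> F \<and> clone A G}"

text \<open>Infinite sequences over A, indexed from 0 (position i here is the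
  paper's position i+1).\<close>
definition seqs :: "'a set \<Rightarrow> (nat \<Rightarrow> 'a) set" where
  "seqs A = {s. \<forall>i. s i \<in> A}"

definition top_ext :: "'a set \<Rightarrow> 'a op \<Rightarrow> (nat \<Rightarrow> 'a) \<Rightarrow> 'a" where
  "top_ext A g = (\<lambda>s. if s \<in> seqs A then snd g (map s [0..<fst g]) else undefined)"

definition full_block :: "'a set \<Rightarrow> ((nat \<Rightarrow> 'a) \<Rightarrow> 'a) set" where
  "full_block A = {top_ext A g | g. is_op A g}"

definition e_op :: "'a set \<Rightarrow> nat \<Rightarrow> (nat \<Rightarrow> 'a) \<Rightarrow> 'a" where
  "e_op A i = (\<lambda>s. if s \<in> seqs A then s i else undefined)"

definition repl :: "(nat \<Rightarrow> 'a) \<Rightarrow> 'a list \<Rightarrow> nat \<Rightarrow> 'a" where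
  "repl s bs = (\<lambda>i. if i < length bs then bs ! i else s i)"

definition q_op :: "'a set \<Rightarrow> ((nat \<Rightarrow> 'a) \<Rightarrow> 'a) \<Rightarrow> ((nat \<Rightarrow> 'a) \<Rightarrow> 'a) list \<Rightarrow> (nat \<Rightarrow> 'a) \<Rightarrow> 'a" where
  "q_op A phi psis = (\<lambda>s. if s \<in> seqs A then phi (repl s (map (\<lambda>psi. psi s) psis)) else undefined)"

definition block_closed :: "'a set \<Rightarrow> ((nat \<Rightarrow> 'a) \<Rightarrow> 'a) set \<Rightarrow> bool" where
  "block_closed A B \<longleftrightarrow>
     (\<forall>i. e_op A i \<in> B)
   \<and> (\<forall>phi psis. phi \<in> B \<longrightarrow> set psis \<subseteq> B \<longrightarrow> q_op A phi psis \<in> B)"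

definition block_algebra :: "'a set \<Rightarrow> ((nat \<Rightarrow> 'a) \<Rightarrow> 'a) set \<Rightarrow> bool" where
  "block_algebra A B \<longleftrightarrow> B \<subseteq> full_block A \<and> block_closed A B"

definition Sub :: "'a set \<Rightarrow> ((nat \<Rightarrow> 'a) \<Rightarrow> 'a) set \<Rightarrow> ((nat \<Rightarrow> 'a) \<Rightarrow> 'a) set set" where
  "Sub A B = {C. C \<subseteq> B \<and> block_closed A C}"

definition lattice_iso_to :: "('l::lattice \<Rightarrow> 'b set) \<Rightarrow> 'b set set \<Rightarrow> bool" where
  "lattice_iso_to h S \<longleftrightarrow> bij_betw h UNIV S \<and> (\<forall>x y. x \<le> y \<longleftrightarrow> h x \<subseteq> h y)"

end

theory Submission
  imports Defs
begin

(* The top extension g \<mapsto> g\<^sup>\<top> sends projections to the e_i, composition to q_n, and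
   leaves restriction invariant. Hence the image of a clone F is a block algebra, and every block
   algebra is the image of the clone of all operations whose top extension lies in it. A subclone
   G of F is determined by G\<^sup>\<top>: an operation with the same top extension as a member of G
   differs from it only by dummy trailing arguments, which can be added by composing with
   projections and removed by restriction. So G \<mapsto> G\<^sup>\<top> is an inclusion-preserving
   bijection Sb(F) \<rightarrow> Sub(F\<^sup>\<top>) with inverse C \<mapsto> {g \<in> F. g\<^sup>\<top> \<in> C}. *)

definition subset_iso :: "('b set \<Rightarrow> 'c set) \<Rightarrow> 'b set set \<Rightarrow> 'c set set \<Rightarrow> bool" where
  "subset_iso \<phi> S S' \<longleftrightarrow> bij_betw \<phi> S S' \<and> (\<forall>X\<in>S. \<forall>Y\<in>S. \<phi> X \<subseteq> \<phi> Y \<longleftrightarrow> X \<subseteq> Y)"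

lemma subset_isoI:
  assumes "\<phi> ` S \<subseteq> S'" and "\<psi> ` S' \<subseteq> S"
    and "\<And>X. X \<in> S \<Longrightarrow> \<psi> (\<phi> X) = X" and "\<And>Y. Y \<in> S' \<Longrightarrow> \<phi> (\<psi> Y) = Y"
    and "mono \<phi>" and "mono \<psi>"
  shows "subset_iso \<phi> S S'"
  unfolding subset_iso_def
proof (intro conjI ballI)
  show "bij_betw \<phi> S S'"
    by (rule bij_betw_byWitness[where f' = \<psi>]) (use assms in auto)
  fix X Y assume "X \<in> S" "Y \<in> S"
  show "\<phi> X \<subseteq> \<phi> Y \<longleftrightarrow> X \<subseteq> Y"
  proof
    assume "\<phi> X \<subseteq> \<phi> Y"
    then have "\<psi> (\<phi> X) \<subseteq> \<psi> (\<phi> Y)" by (rule monoD[OF \<open>mono \<psi>\<close>])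
    then show "X \<subseteq> Y" using assms(3) \<open>X \<in> S\<close> \<open>Y \<in> S\<close> by simp
  qed (use \<open>mono \<phi>\<close> in \<open>rule monoD\<close>)
qed

lemma subset_iso_inv_into:
  assumes "subset_iso \<phi> S S'"
  shows "subset_iso (inv_into S \<phi>) S' S"
proof -
  have bij: "bij_betw \<phi> S S'" using assms by (simp add: subset_iso_def)
  have "inv_into S \<phi> Y \<in> S" and "\<phi> (inv_into S \<phi> Y) = Y" if "Y \<in> S'" for Y
    using bij that by (auto simp: bij_betw_def inv_into_into f_inv_into_f)
  then show ?thesis
    using assms bij_betw_inv_into[OF bij] unfolding subset_iso_def by metis
qed

lemma lattice_iso_to_comp:
  assumes "lattice_iso_to h S" and "subset_iso \<phi> S S'"
  shows "lattice_iso_to (\<phi> \<circ> h) S'"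
proof -
  have "h x \<in> S" for x using assms(1) by (auto simp: lattice_iso_to_def bij_betw_def)
  then show ?thesis
    using assms bij_betw_trans by (fastforce simp: lattice_iso_to_def subset_iso_def)
qed

lemma is_op_proj: "i < n \<Longrightarrow> is_op A (proj A n i)"
  by (auto simp: is_op_def proj_def args_def)

lemma is_op_comp_op:
  assumes "is_op A (n, f)" and "length gs = n" and "\<forall>g\<in>set gs. is_op A g \<and> fst g = k"
  shows "is_op A (comp_op A k f gs)"
proof -
  have "map (\<lambda>g. snd g xs) gs \<in> args A n" if "xs \<in> args A k" for xs
    using assms that by (auto simp: args_def is_op_def)
  then show ?thesis using assms(1) by (auto simp: is_op_def comp_op_def)
qed

lemma is_op_restr_op:
  assumes "is_op A (n, f)" and "1 \<le> n" and "b \<in> A"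
  shows "is_op A (restr_op A n f b)"
proof -
  have "xs @ [b] \<in> args A n" if "xs \<in> args A (n - 1)" for xs
    using that assms by (auto simp: args_def)
  then show ?thesis using assms(1) by (auto simp: is_op_def restr_op_def)
qed

lemma indep_lastD:
  "indep_last A n f \<Longrightarrow> xs \<in> args A (n - 1) \<Longrightarrow> a \<in> A \<Longrightarrow> b \<in> A
    \<Longrightarrow> f (xs @ [a]) = f (xs @ [b])"
  unfolding indep_last_def by blast

lemma cloneI:
  assumes "\<And>g. g \<in> G \<Longrightarrow> is_op A g"
    and "\<And>n i. i < n \<Longrightarrow> proj A n i \<in> G"
    and "\<And>n f k gs. (n, f) \<in> G \<Longrightarrow> length gs = n \<Longrightarrow> \<forall>g\<in>set gs. g \<in> G \<and> fst g = k
           \<Longrightarrow> comp_op A k f gs \<in> G"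
    and "\<And>n f b. (n, f) \<in> G \<Longrightarrow> 1 \<le> n \<Longrightarrow> indep_last A n f \<Longrightarrow> b \<in> A
           \<Longrightarrow> restr_op A n f b \<in> G"
  shows "clone A G"
  using assms unfolding clone_def by blast

lemma clone_is_op: "clone A G \<Longrightarrow> g \<in> G \<Longrightarrow> is_op A g"
  by (simp add: clone_def)

lemma clone_proj: "clone A G \<Longrightarrow> i < n \<Longrightarrow> proj A n i \<in> G"
  by (simp add: clone_def)

lemma clone_comp_op:
  "clone A G \<Longrightarrow> (n, f) \<in> G \<Longrightarrow> length gs = n \<Longrightarrow> \<forall>g\<in>set gs. g \<in> G \<and> fst g = k
    \<Longrightarrow> comp_op A k f gs \<in> G"
  unfolding clone_def by blast

lemma clone_restr_op:
  "clone A G \<Longrightarrow> (n, f) \<in> G \<Longrightarrow> 1 \<le> n \<Longrightarrow> indep_last A n f \<Longrightarrow> b \<in> A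
    \<Longrightarrow> restr_op A n f b \<in> G"
  unfolding clone_def by blast

lemma clone_all_ops: "clone A {g. is_op A g}"
  by (rule cloneI) (auto simp: is_op_proj is_op_comp_op is_op_restr_op)

lemma clone_empty_carrier_all_ops:
  assumes "clone {} G" and "is_op {} g"
  shows "g \<in> G"
proof -
  obtain k f where g: "g = (k, f)" by (cases g)
  have "0 < k"
  proof (rule ccontr)
    assume "\<not> 0 < k"
    then have "[] \<in> args {} k" by (simp add: args_def)
    then show False using assms(2) g by (auto simp: is_op_def)
  qed
  then have "args {} k = {}" by (auto simp: args_def)
  then have "f = (\<lambda>_. undefined)" using assms(2) g by (auto simp: is_op_def)
  then have "g = proj {} k 0" using \<open>0 < k\<close> g by (auto simp: proj_def args_def)
  with \<open>0 < k\<close> show ?thesis using clone_proj[OF assms(1)] by simp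
qed

definition pad :: "'a set \<Rightarrow> nat \<Rightarrow> 'a op \<Rightarrow> 'a op" where
  "pad A K g = comp_op A K (snd g) (map (proj A K) [0..<fst g])"

lemma fst_pad: "fst (pad A K g) = K"
  by (simp add: pad_def comp_op_def)

lemma pad_in_clone:
  assumes "clone A G" and "g \<in> G" and "fst g \<le> K"
  shows "pad A K g \<in> G"
  unfolding pad_def
proof (rule clone_comp_op[OF assms(1)])
  show "(fst g, snd g) \<in> G" using assms(2) by simp
  have "proj A K i \<in> G" and "fst (proj A K i) = K" if "i < fst g" for i
    using that assms(3) clone_proj[OF assms(1)] by (simp_all add: proj_def)
  then show "\<forall>p\<in>set (map (proj A K) [0..<fst g]). p \<in> G \<and> fst p = K" by auto
qed simp

lemma repl_in_seqs: "s \<in> seqs A \<Longrightarrow> set bs \<subseteq> A \<Longrightarrow> repl s bs \<in> seqs A"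
  by (auto simp: seqs_def repl_def)

lemma map_repl: "k \<le> length bs \<Longrightarrow> map (repl s bs) [0..<k] = take k bs"
  by (rule nth_equalityI) (auto simp: repl_def)

lemma map_in_args: "s \<in> seqs A \<Longrightarrow> map s [0..<n] \<in> args A n"
  by (auto simp: args_def seqs_def)

lemma top_ext_apply: "s \<in> seqs A \<Longrightarrow> top_ext A g s = snd g (map s [0..<fst g])"
  by (simp add: top_ext_def)

lemma top_ext_in: "is_op A g \<Longrightarrow> s \<in> seqs A \<Longrightarrow> top_ext A g s \<in> A"
  by (auto simp: is_op_def top_ext_apply map_in_args)

lemma top_ext_cong:
  assumes "u \<in> seqs A" and "v \<in> seqs A" and "\<And>i. i < fst g \<Longrightarrow> u i = v i"
  shows "top_ext A g u = top_ext A g v"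
proof -
  have "map u [0..<fst g] = map v [0..<fst g]" by (rule map_cong) (use assms(3) in auto)
  then show ?thesis unfolding top_ext_apply[OF assms(1)] top_ext_apply[OF assms(2)] by (rule arg_cong)
qed

lemma e_op_apply: "s \<in> seqs A \<Longrightarrow> e_op A i s = s i"
  by (simp add: e_op_def)

lemma top_ext_proj: "i < n \<Longrightarrow> top_ext A (proj A n i) = e_op A i"
  by (auto simp: top_ext_def e_op_def proj_def map_in_args)

lemma top_ext_comp_op:
  assumes "length gs = n" and "\<forall>g\<in>set gs. is_op A g \<and> fst g = k"
  shows "top_ext A (comp_op A k f gs) = q_op A (top_ext A (n, f)) (map (top_ext A) gs)"
proof
  fix s
  show "top_ext A (comp_op A k f gs) s = q_op A (top_ext A (n, f)) (map (top_ext A) gs) s"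
  proof (cases "s \<in> seqs A")
    case True
    define bs where "bs = map (\<lambda>g. top_ext A g s) gs"
    have "set bs \<subseteq> A" using assms(2) True by (auto simp: bs_def top_ext_in)
    then have "top_ext A (n, f) (repl s bs) = f bs"
      using True assms(1) by (simp add: top_ext_apply repl_in_seqs map_repl bs_def)
    also have "\<dots> = f (map (\<lambda>g. snd g (map s [0..<k])) gs)"
      unfolding bs_def using True assms(2) by (intro arg_cong[where f = f]) (simp add: top_ext_apply)
    also have "\<dots> = top_ext A (comp_op A k f gs) s"
      using True by (simp add: top_ext_apply comp_op_def map_in_args)
    finally show ?thesis using True by (simp add: q_op_def bs_def comp_def)
  qed (simp add: top_ext_def q_op_def)
qed

lemma top_ext_restr_op:
  assumes "1 \<le> n" and "indep_last A n f" and "b \<in> A"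
  shows "top_ext A (restr_op A n f b) = top_ext A (n, f)"
proof
  fix s
  show "top_ext A (restr_op A n f b) s = top_ext A (n, f) s"
  proof (cases "s \<in> seqs A")
    case True
    obtain m where n: "n = Suc m" using assms(1) by (cases n) auto
    have sm: "s m \<in> A" and xs: "map s [0..<m] \<in> args A (n - 1)"
      using True by (auto simp: seqs_def map_in_args n)
    have "f (map s [0..<m] @ [b]) = f (map s [0..<m] @ [s m])"
      by (rule indep_lastD[OF assms(2) xs assms(3) sm])
    with xs show ?thesis
      using True by (simp add: top_ext_apply restr_op_def n)
  qed (simp add: top_ext_def)
qed

lemma top_ext_pad:
  assumes "fst g \<le> K"
  shows "top_ext A (pad A K g) = top_ext A g"
proof
  fix s
  show "top_ext A (pad A K g) s = top_ext A g s"
  proof (cases "s \<in> seqs A")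
    case True
    have "map (\<lambda>p. snd p (map s [0..<K])) (map (proj A K) [0..<fst g]) = map s [0..<fst g]"
      using assms True by (auto simp: proj_def map_in_args)
    then show ?thesis
      using True by (simp add: top_ext_apply pad_def comp_op_def map_in_args del: map_map)
  qed (simp add: top_ext_def)
qed

lemma top_ext_inj:
  assumes "is_op A g" and "is_op A g'" and "fst g = fst g'" and "top_ext A g = top_ext A g'"
  shows "g = g'"
proof (rule prod_eqI)
  show "snd g = snd g'"
  proof
    fix xs
    show "snd g xs = snd g' xs"
    proof (cases "xs \<in> args A (fst g)")
      case True
      then obtain a where "a \<in> A" using assms(1) by (auto simp: is_op_def)
      then have "(\<lambda>_. a) \<in> seqs A" by (simp add: seqs_def)
      then have "repl (\<lambda>_. a) xs \<in> seqs A"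
        using True by (simp add: args_def repl_in_seqs)
      moreover have "length xs = fst g" "length xs = fst g'"
        using True assms(3) by (auto simp: args_def)
      ultimately have "snd g xs = top_ext A g (repl (\<lambda>_. a) xs)"
        and "snd g' xs = top_ext A g' (repl (\<lambda>_. a) xs)"
        by (simp_all add: top_ext_apply map_repl)
      then show ?thesis using assms(4) by simp
    qed (use assms in \<open>auto simp: is_op_def\<close>)
  qed
qed (fact assms(3))

lemma indep_last_if_top_ext_eq:
  assumes "top_ext A (n, f) = top_ext A g" and "fst g < n"
  shows "indep_last A n f"
  unfolding indep_last_def
proof (intro ballI)
  fix xs a b assume xs: "xs \<in> args A (n - 1)" and "a \<in> A" "b \<in> A"
  have "f (xs @ [c]) = snd g (take (fst g) xs)" if "c \<in> A" for c
  proof -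
    have len: "length (xs @ [c]) = n" and "fst g \<le> length xs"
      using xs assms(2) by (auto simp: args_def)
    have "(\<lambda>_. c) \<in> seqs A" using that by (simp add: seqs_def)
    then have s: "repl (\<lambda>_. c) (xs @ [c]) \<in> seqs A"
      using xs that by (simp add: args_def repl_in_seqs)
    have "f (xs @ [c]) = top_ext A (n, f) (repl (\<lambda>_. c) (xs @ [c]))"
      using s len by (simp add: top_ext_apply map_repl)
    also have "\<dots> = top_ext A g (repl (\<lambda>_. c) (xs @ [c]))"
      using assms(1) by simp
    also have "\<dots> = snd g (take (fst g) xs)"
      using s len \<open>fst g \<le> length xs\<close> by (simp add: top_ext_apply map_repl)
    finally show ?thesis .
  qed
  then show "f (xs @ [a]) = f (xs @ [b])" using \<open>a \<in> A\<close> \<open>b \<in> A\<close> by simp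
qed

lemma clone_remove_dummy_args:
  assumes "clone A G" and "b \<in> A"
  shows "(n, f) \<in> G \<Longrightarrow> fst g \<le> n \<Longrightarrow> top_ext A (n, f) = top_ext A g
    \<Longrightarrow> \<exists>g'\<in>G. fst g' = fst g \<and> top_ext A g' = top_ext A g"
proof (induction n arbitrary: f)
  case 0
  then show ?case by (intro bexI[of _ "(0, f)"]) auto
next
  case (Suc n)
  show ?case
  proof (cases "fst g = Suc n")
    case True
    then show ?thesis using Suc.prems by (intro bexI[of _ "(Suc n, f)"]) auto
  next
    case False
    with Suc.prems(2) have "fst g \<le> n" by simp
    have ind: "indep_last A (Suc n) f"
      using Suc.prems(3) \<open>fst g \<le> n\<close> by (simp add: indep_last_if_top_ext_eq)
    have "restr_op A (Suc n) f b \<in> G"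
      using clone_restr_op[OF assms(1) Suc.prems(1) _ ind assms(2)] by simp
    moreover have "top_ext A (restr_op A (Suc n) f b) = top_ext A g"
      using top_ext_restr_op[OF _ ind assms(2)] Suc.prems(3) by simp
    moreover have "restr_op A (Suc n) f b = (n, snd (restr_op A (Suc n) f b))"
      by (simp add: restr_op_def)
    ultimately show ?thesis using Suc.IH \<open>fst g \<le> n\<close> by metis
  qed
qed

lemma clone_top_ext_closed:
  assumes "clone A G" and "is_op A g" and "g' \<in> G" and "top_ext A g' = top_ext A g"
  shows "g \<in> G"
proof (cases "A = {}")
  case True
  \<comment> \<open>removing dummy arguments by restriction needs an element of A\<close>
  then show ?thesis using clone_empty_carrier_all_ops assms(1,2) by blast
next
  case False
  then obtain b where "b \<in> A" by blast
  obtain g'' where "g'' \<in> G" "fst g'' = fst g" "top_ext A g'' = top_ext A g"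
  proof (cases "fst g' \<le> fst g")
    case True
    then show ?thesis
      using pad_in_clone[OF assms(1,3) True] assms(4)
      by (intro that[of "pad A (fst g) g'"]) (simp_all add: fst_pad top_ext_pad)
  next
    case False
    obtain n f where "g' = (n, f)" by (cases g')
    then show ?thesis
      using clone_remove_dummy_args[OF assms(1) \<open>b \<in> A\<close>, of n f g] False assms(3,4) that by auto
  qed
  moreover have "is_op A g''" using \<open>g'' \<in> G\<close> clone_is_op[OF assms(1)] by simp
  ultimately have "g'' = g" using top_ext_inj assms(2) by blast
  with \<open>g'' \<in> G\<close> show ?thesis by simp
qed

lemma clone_preimage_block_closed:
  assumes F: "clone A F" and C: "block_closed A C"
  shows "clone A {g \<in> F. top_ext A g \<in> C}"
proof (rule cloneI)
  fix g assume "g \<in> {g \<in> F. top_ext A g \<in> C}"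
  then show "is_op A g" using clone_is_op[OF F] by simp
next
  fix n i :: nat assume "i < n"
  then show "proj A n i \<in> {g \<in> F. top_ext A g \<in> C}"
    using clone_proj[OF F] C by (simp add: top_ext_proj block_closed_def)
next
  fix n f k gs
  assume nf: "(n, f) \<in> {g \<in> F. top_ext A g \<in> C}" and len: "length gs = n"
    and gs: "\<forall>g\<in>set gs. g \<in> {g \<in> F. top_ext A g \<in> C} \<and> fst g = k"
  have "comp_op A k f gs \<in> F" using clone_comp_op[OF F, of n f gs k] nf len gs by blast
  moreover have "top_ext A (comp_op A k f gs) \<in> C"
  proof -
    have "set (map (top_ext A) gs) \<subseteq> C" using gs by auto
    then have "q_op A (top_ext A (n, f)) (map (top_ext A) gs) \<in> C"
      using C nf unfolding block_closed_def by blast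
    moreover have "\<forall>g\<in>set gs. is_op A g \<and> fst g = k" using gs clone_is_op[OF F] by simp
    ultimately show ?thesis using top_ext_comp_op[OF len] by simp
  qed
  ultimately show "comp_op A k f gs \<in> {g \<in> F. top_ext A g \<in> C}" by simp
next
  fix n f b
  assume "(n, f) \<in> {g \<in> F. top_ext A g \<in> C}" and n: "1 \<le> n"
    and ind: "indep_last A n f" and b: "b \<in> A"
  then show "restr_op A n f b \<in> {g \<in> F. top_ext A g \<in> C}"
    using clone_restr_op[OF F _ n ind b] top_ext_restr_op[OF n ind b] by simp
qed

lemma q_op_top_ext_fill_args:
  assumes "\<forall>\<psi>\<in>set \<psi>s. \<forall>s\<in>seqs A. \<psi> s \<in> A"
  shows "q_op A (top_ext A g) (map (\<lambda>i. if i < length \<psi>s then \<psi>s ! i else e_op A i) [0..<fst g])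
    = q_op A (top_ext A g) \<psi>s"
proof
  fix s
  show "q_op A (top_ext A g) (map (\<lambda>i. if i < length \<psi>s then \<psi>s ! i else e_op A i) [0..<fst g]) s
    = q_op A (top_ext A g) \<psi>s s"
  proof (cases "s \<in> seqs A")
    case True
    define bs where "bs = map (\<lambda>i. if i < length \<psi>s then (\<psi>s ! i) s else s i) [0..<fst g]"
    define cs where "cs = map (\<lambda>\<psi>. \<psi> s) \<psi>s"
    have "set bs \<subseteq> A" and "set cs \<subseteq> A"
      using assms True by (auto simp: bs_def cs_def seqs_def)
    then have "repl s bs \<in> seqs A" and "repl s cs \<in> seqs A"
      using True by (simp_all add: repl_in_seqs)
    then have "top_ext A g (repl s bs) = top_ext A g (repl s cs)"
      by (rule top_ext_cong) (auto simp: repl_def bs_def cs_def)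
    moreover have "map (\<lambda>\<psi>. \<psi> s) (map (\<lambda>i. if i < length \<psi>s then \<psi>s ! i else e_op A i) [0..<fst g])
      = bs"
      using True by (simp add: bs_def e_op_apply)
    ultimately show ?thesis
      using True by (simp add: q_op_def cs_def)
  qed (simp add: q_op_def)
qed

lemma block_closed_image_clone:
  assumes G: "clone A G"
  shows "block_closed A (top_ext A ` G)"
  unfolding block_closed_def
proof (intro conjI allI impI)
  fix i
  have "top_ext A (proj A (Suc i) i) \<in> top_ext A ` G" using clone_proj[OF G] by simp
  then show "e_op A i \<in> top_ext A ` G" by (simp add: top_ext_proj)
next
  fix \<phi> \<psi>s assume "\<phi> \<in> top_ext A ` G" and "set \<psi>s \<subseteq> top_ext A ` G"
  then obtain g where g: "g \<in> G" "\<phi> = top_ext A g" by blast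
  have "\<psi>s \<in> map (top_ext A) ` lists G"
    unfolding lists_image[symmetric] using \<open>set \<psi>s \<subseteq> top_ext A ` G\<close> by (simp add: lists_eq_set)
  then obtain gs where gs: "set gs \<subseteq> G" "\<psi>s = map (top_ext A) gs" by (auto simp: lists_eq_set)
  define K where "K = Max (insert (fst g) (fst ` set gs))"
  have "fst g \<le> K" and gs_K: "\<And>g'. g' \<in> set gs \<Longrightarrow> fst g' \<le> K"
    by (simp_all add: K_def)
  \<comment> \<open>all arguments are padded to a common arity K; positions beyond the \<psi>s get projections,
    matching q_op, which leaves those positions of the sequence unchanged\<close>
  define hs where "hs = map (\<lambda>i. if i < length gs then pad A K (gs ! i) else proj A K i) [0..<fst g]"
  have "pad A K (gs ! i) \<in> G" if "i < length gs" for i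
    using that gs(1) gs_K by (intro pad_in_clone[OF G]) auto
  then have hs: "\<forall>h\<in>set hs. h \<in> G \<and> fst h = K"
    using clone_proj[OF G] \<open>fst g \<le> K\<close>
    by (auto simp: hs_def fst_pad proj_def)
  have len: "length hs = fst g" by (simp add: hs_def)
  have "comp_op A K (snd g) hs \<in> G"
    using clone_comp_op[OF G, of "fst g" "snd g" hs K] g(1) hs len by simp
  moreover have "top_ext A (comp_op A K (snd g) hs) = q_op A \<phi> \<psi>s"
  proof -
    have ops: "\<forall>h\<in>set hs. is_op A h \<and> fst h = K" using hs clone_is_op[OF G] by simp
    have vals: "\<forall>\<psi>\<in>set \<psi>s. \<forall>s\<in>seqs A. \<psi> s \<in> A"
      using gs by (auto intro!: top_ext_in clone_is_op[OF G])
    have "top_ext A (comp_op A K (snd g) hs) = q_op A \<phi> (map (top_ext A) hs)"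
      using top_ext_comp_op[OF len ops] g(2) by simp
    also have "map (top_ext A) hs
      = map (\<lambda>i. if i < length \<psi>s then \<psi>s ! i else e_op A i) [0..<fst g]"
      using gs_K \<open>fst g \<le> K\<close> by (auto simp: hs_def gs(2) top_ext_pad top_ext_proj)
    also have "q_op A \<phi> \<dots> = q_op A \<phi> \<psi>s"
      unfolding g(2) using vals by (rule q_op_top_ext_fill_args)
    finally show ?thesis .
  qed
  ultimately show "q_op A \<phi> \<psi>s \<in> top_ext A ` G" by (metis imageI)
qed

lemma subset_iso_top_ext_image:
  assumes F: "clone A F"
  shows "subset_iso (image (top_ext A)) (Sb A F) (Sub A (top_ext A ` F))"
proof (rule subset_isoI[where \<psi> = "\<lambda>C. {g \<in> F. top_ext A g \<in> C}"])
  show "image (top_ext A) ` Sb A F \<subseteq> Sub A (top_ext A ` F)"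
    using block_closed_image_clone by (auto simp: Sb_def Sub_def)
  show "(\<lambda>C. {g \<in> F. top_ext A g \<in> C}) ` Sub A (top_ext A ` F) \<subseteq> Sb A F"
    using clone_preimage_block_closed[OF F] by (auto simp: Sb_def Sub_def)
  show "{g \<in> F. top_ext A g \<in> top_ext A ` G} = G" if "G \<in> Sb A F" for G
    using that clone_top_ext_closed[of A G] clone_is_op[OF F] by (auto simp: Sb_def)
  show "top_ext A ` {g \<in> F. top_ext A g \<in> C} = C" if "C \<in> Sub A (top_ext A ` F)" for C
    using that by (auto simp: Sub_def)
qed (auto intro: monoI)

lemma block_algebra_image_clone:
  assumes "clone A F"
  shows "block_algebra A (top_ext A ` F)"
  unfolding block_algebra_def full_block_def
  using block_closed_image_clone[OF assms] clone_is_op[OF assms] by blast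

lemma block_algebra_is_image_clone:
  assumes "block_algebra A B"
  shows "\<exists>F. clone A F \<and> top_ext A ` F = B"
proof (intro exI conjI)
  show "clone A {g \<in> {g. is_op A g}. top_ext A g \<in> B}"
    using assms clone_preimage_block_closed[OF clone_all_ops] unfolding block_algebra_def by blast
  show "top_ext A ` {g \<in> {g. is_op A g}. top_ext A g \<in> B} = B"
    using assms by (auto simp: block_algebra_def full_block_def)
qed

theorem proposition10p8:
  fixes L :: "'l::lattice itself"
  shows "(\<exists>(A::'a set) F (h::'l \<Rightarrow> 'a op set). clone A F \<and> lattice_iso_to h (Sb A F))
     \<longleftrightarrow> (\<exists>(A::'a set) B (h::'l \<Rightarrow> ((nat \<Rightarrow> 'a) \<Rightarrow> 'a) set).
            block_algebra A B \<and> lattice_iso_to h (Sub A B))"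
proof
  assume "\<exists>(A::'a set) F (h::'l \<Rightarrow> 'a op set). clone A F \<and> lattice_iso_to h (Sb A F)"
  then obtain A F and h :: "'l \<Rightarrow> 'a op set"
    where F: "clone A F" and h: "lattice_iso_to h (Sb A F)" by blast
  have "lattice_iso_to (image (top_ext A) \<circ> h) (Sub A (top_ext A ` F))"
    using h by (rule lattice_iso_to_comp[OF _ subset_iso_top_ext_image[OF F]])
  with block_algebra_image_clone[OF F] show "\<exists>(A::'a set) B (h::'l \<Rightarrow> ((nat \<Rightarrow> 'a) \<Rightarrow> 'a) set).
    block_algebra A B \<and> lattice_iso_to h (Sub A B)" by blast
next
  assume "\<exists>(A::'a set) B (h::'l \<Rightarrow> ((nat \<Rightarrow> 'a) \<Rightarrow> 'a) set).
    block_algebra A B \<and> lattice_iso_to h (Sub A B)"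
  then obtain A B and h :: "'l \<Rightarrow> ((nat \<Rightarrow> 'a) \<Rightarrow> 'a) set"
    where "block_algebra A B" and h: "lattice_iso_to h (Sub A B)" by blast
  then obtain F where F: "clone A F" and B: "B = top_ext A ` F"
    using block_algebra_is_image_clone by metis
  have "lattice_iso_to (inv_into (Sb A F) (image (top_ext A)) \<circ> h) (Sb A F)"
    using h unfolding B
    by (rule lattice_iso_to_comp[OF _ subset_iso_inv_into[OF subset_iso_top_ext_image[OF F]]])
  with F show "\<exists>(A::'a set) F (h::'l \<Rightarrow> 'a op set). clone A F \<and> lattice_iso_to h (Sb A F)"
    by blast
qed

end
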